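(* Let $W$ be any BISO channel and let $\eta=\eta_{KL}(W)$. Then $$\mathrm{BEC}(1-\eta)\succeq_{\mathrm{l.n.}} W\succeq_{\mathrm{l.n.}}\mathrm{BSC}\Big(\tfrac{1-\sqrt{\eta}}{2}\Big).$$ (Note $\eta_{KL}(\mathrm{BEC}(1-\eta))=\eta_{KL}(\mathrm{BSC}(\frac{1-\sqrt\eta}{2}))=\eta$, so among BISO channels with a fixed KL contraction coefficient, the BEC is maximal and the BSC minimal in the less noisy order.)
   Context: A binary-input symmetric-output (BISO) channel is a channel $P_{Y|X}$ with input alphabet $\{0,1\}$ and finite output alphabet $\mathcal Y=\{0,\pm1,\dots,\pm l\}$ for some integer $l\ge 1$ (some transition probabilities may be zero), such that $P_{Y|X}(y|0)=P_{Y|X}(-y|1)=:p_y$ for all $y\in\mathcal Y$. $\mathrm{BSC}(p)$ is the binary symmetric channel on $\{0,1\}$ with crossover probability $p$; $\mathrm{BEC}(\varepsilon)$ is the binary erasure channel with input $\{0,1\}$, output $\{0,e,1\}$, mapping input $x$ to $x$ with probability $1-\varepsilon$ and to the erasure symbol $e$ with probability $\varepsilon$. The KL contraction coefficient is $\eta_{KL}(P)=\sup_{P_X,Q_X}\frac{D(P\circ P_X\|P\circ Q_X)}{D(P_X\|Q_X)}$ (supremum over input distributions with $0<D(P_X\|Q_X)<\infty$, $P\circ P_X$ the output distribution). For channels $P_{Y|X},Q_{Y'|X}$ with the same input alphabet, $P\succeq_{\mathrm{l.n.}}Q$ (less noisy) means: for every finite-alphabet random variable $U$ and every joint distribution $P_{UX}$,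 with $U-X-Y$ and $U-X-Y'$ Markov chains, $I(U:Y)\ge I(U:Y')$. *)

theory Defs
  imports Complex_Main
begin

text \<open>Binary input alphabet: False = 0, True = 1. A channel is a transition
 kernel ch x y = P(Y = y | X = x) together with an explicit finite output alphabet.\<close>

definition is_channel :: "(bool \<Rightarrow> 'y \<Rightarrow> real) \<Rightarrow> 'y set \<Rightarrow> bool" where
  "is_channel ch Y \<longleftrightarrow> finite Y \<and> (\<forall>x y. ch x y \<ge> 0) \<and> (\<forall>x. \<forall>y. y \<notin> Y \<longrightarrow> ch x y = 0)
     \<and> (\<forall>x. (\<Sum>y\<in>Y. ch x y) = 1)"

text \<open>BISO channel with output alphabet {-l..l} and parameters p_y = P(y|0) = P(-y|1).\<close>
definition biso :: "(int \<Rightarrow> real) \<Rightarrow> bool \<Rightarrow> int \<Rightarrow> real" where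
  "biso p x y = (if x then p (- y) else p y)"

definition is_biso_param :: "int \<Rightarrow> (int \<Rightarrow> real) \<Rightarrow> bool" where
  "is_biso_param l p \<longleftrightarrow> l \<ge> 1 \<and> (\<forall>y\<in>{-l..l}. p y \<ge> 0) \<and> (\<forall>y. y \<notin> {-l..l} \<longrightarrow> p y = 0)
     \<and> (\<Sum>y\<in>{-l..l}. p y) = 1"

definition BSC :: "real \<Rightarrow> bool \<Rightarrow> bool \<Rightarrow> real" where
  "BSC q x y = (if y = x then 1 - q else q)"

text \<open>Erasure symbol e is None.\<close>
definition BEC :: "real \<Rightarrow> bool \<Rightarrow> bool option \<Rightarrow> real" where
  "BEC \<epsilon> x y = (case y of None \<Rightarrow> \<epsilon> | Some b \<Rightarrow> (if b = x then 1 - \<epsilon> else 0))"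

definition BEC_out :: "bool option set" where
  "BEC_out = {None, Some False, Some True}"

definition is_dist2 :: "(bool \<Rightarrow> real) \<Rightarrow> bool" where
  "is_dist2 P \<longleftrightarrow> (\<forall>x. P x \<ge> 0) \<and> P False + P True = 1"

text \<open>KL divergence (natural log, 0 log 0 = 0) on a finite set; it is finite
 exactly when P is absolutely continuous w.r.t. Q, which is imposed separately.\<close>
definition KL :: "'a set \<Rightarrow> ('a \<Rightarrow> real) \<Rightarrow> ('a \<Rightarrow> real) \<Rightarrow> real" where
  "KL A P Q = (\<Sum>a\<in>A. if P a = 0 then 0 else P a * ln (P a / Q a))"

definition abs_cont :: "'a set \<Rightarrow> ('a \<Rightarrow> real) \<Rightarrow> ('a \<Rightarrow> real) \<Rightarrow> bool" where
  "abs_cont A P Q \<longleftrightarrow> (\<forall>a\<in>A. Q a = 0 \<longrightarrow> P a = 0)"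

definition out_dist :: "(bool \<Rightarrow> 'y \<Rightarrow> real) \<Rightarrow> (bool \<Rightarrow> real) \<Rightarrow> 'y \<Rightarrow> real" where
  "out_dist ch P y = (\<Sum>x\<in>UNIV. P x * ch x y)"

definition eta_KL :: "(bool \<Rightarrow> 'y \<Rightarrow> real) \<Rightarrow> 'y set \<Rightarrow> real" where
  "eta_KL ch Y = Sup {KL Y (out_dist ch P) (out_dist ch Q) / KL UNIV P Q | P Q.
      is_dist2 P \<and> is_dist2 Q \<and> abs_cont UNIV P Q \<and> 0 < KL UNIV P Q}"

text \<open>Mutual information I(U;Y) for U - X - Y, where U takes values in {..<k}
 and PUX is the joint distribution of (U,X).\<close>
definition mutual_info :: "(bool \<Rightarrow> 'y \<Rightarrow> real) \<Rightarrow> 'y set \<Rightarrow> nat \<Rightarrow> (nat \<Rightarrow> bool \<Rightarrow> real) \<Rightarrow> real" where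
  "mutual_info ch Y k PUX =
    (let PUY = (\<lambda>u y. \<Sum>x\<in>UNIV. PUX u x * ch x y);
         PU = (\<lambda>u. \<Sum>x\<in>UNIV. PUX u x);
         PY = (\<lambda>y. \<Sum>u<k. PUY u y)
     in \<Sum>u<k. \<Sum>y\<in>Y. if PUY u y = 0 then 0 else PUY u y * ln (PUY u y / (PU u * PY y)))"

definition is_joint :: "nat \<Rightarrow> (nat \<Rightarrow> bool \<Rightarrow> real) \<Rightarrow> bool" where
  "is_joint k PUX \<longleftrightarrow> (\<forall>u x. PUX u x \<ge> 0) \<and> (\<Sum>u<k. \<Sum>x\<in>UNIV. PUX u x) = 1"

text \<open>Less noisy: P \<succeq>_ln Q. Every finite-alphabet U is, up to relabelling, valued in some {..<k}.\<close>
definition less_noisy :: "(bool \<Rightarrow> 'y \<Rightarrow> real) \<Rightarrow> 'y set \<Rightarrow> (bool \<Rightarrow> 'z \<Rightarrow> real) \<Rightarrow> 'z set \<Rightarrow> bool" where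
  "less_noisy P Y Q Z \<longleftrightarrow> (\<forall>k PUX. is_joint k PUX \<longrightarrow> mutual_info P Y k PUX \<ge> mutual_info Q Z k PUX)"

end

theory Submission
  imports Defs "HOL-Analysis.Harmonic_Numbers"
begin

text \<open>Describe a binary input law by its bias x = P(0) - P(1). The binary divergence d(x,y)
  expands as a series \<Sum>m a_m(x,y) of nonnegative terms homogeneous of degree 2m+2, so that
  d(c x, c y) = \<Sum>m c^(2m+2) a_m(x,y). Pairing the outputs j and -j writes a BISO channel W as
  a mixture of binary symmetric channels with weights w_j and biases c_j, hence
  D(PW || QW) = \<Sum>m (\<Sum>j w_j c_j^(2m+2)) a_m(x,y). With theta = \<Sum>j w_j c_j^2 these
  coefficients lie between theta^(m+1) (by Jensen) and theta, which gives
  d(sqrt e x, sqrt e y) \<le> D(PW || QW) \<le> theta d(x,y) for all e \<le> theta; in particular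
  eta \<le> theta. The left-hand side with e = eta is the output divergence of
  BSC((1 - sqrt eta)/2), and eta d(x,y) is that of BEC(1 - eta), which dominates D(PW || QW)
  by the definition of eta. Comparisons of output divergences yield the less noisy order
  because I(U;Y) is the average over u of D(P_{Y|U=u} || P_Y).\<close>

definition ln_pair_term :: "real \<Rightarrow> nat \<Rightarrow> real" where
  "ln_pair_term t m = t^(2*m+1) / real (2*m+1) - t^(2*m+2) / real (2*m+2)"

lemma ln_pair_term_sums:
  assumes "\<bar>t\<bar> < 1"
  shows "ln_pair_term t sums ln (1 + t)"
proof -
  have "(\<lambda>n. - ((-t)^Suc n) / of_nat (Suc n)) sums ln (1 + t)"
    using sums_Suc_iff[of "\<lambda>n. - ((-t)^n) / of_nat n"] ln_series'[OF assms] by simp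
  moreover have "(\<lambda>m. \<Sum>i\<in>{m*2..<m*2+2}. - ((-t)^Suc i) / real (Suc i)) = ln_pair_term t"
  proof
    fix m
    have "{m*2..<m*2+2} = {2*m, Suc (2*m)}" by auto
    then show "(\<Sum>i\<in>{m*2..<m*2+2}. - ((-t)^Suc i) / real (Suc i)) = ln_pair_term t m"
      by (simp add: ln_pair_term_def power_minus' field_simps)
  qed
  ultimately show ?thesis using sums_group[of _ _ 2] by fastforce
qed

lemma ln_pair_term_one_sums: "ln_pair_term 1 sums ln 2"
proof -
  have "ln_pair_term 1 = (\<lambda>k. inverse (real (2*k+1)) - inverse (real (2*k+2)))"
    by (auto simp: ln_pair_term_def divide_inverse)
  then show ?thesis using alternating_harmonic_series_sums' by simp
qed

lemma neg_entropy_sums: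
  assumes "\<bar>x\<bar> \<le> 1"
  shows "(\<lambda>m. (1+x)/2 * ln_pair_term x m + (1-x)/2 * ln_pair_term (-x) m)
           sums ((1+x)/2 * ln (1+x) + (1-x)/2 * ln (1-x))"
proof -
  consider "\<bar>x\<bar> < 1" | "x = 1" | "x = -1" using assms by linarith
  then show ?thesis
  proof cases
    case 1
    then have "ln_pair_term x sums ln (1 + x)" "ln_pair_term (-x) sums ln (1 - x)"
      using ln_pair_term_sums[of x] ln_pair_term_sums[of "-x"] by auto
    then show ?thesis by (intro sums_add sums_mult)
  qed (use ln_pair_term_one_sums in simp_all)
qed

text \<open>The divergence between the binary distributions with biases x and y, i.e. with
  masses (1 \<plusminus> x)/2 and (1 \<plusminus> y)/2; for \<bar>x\<bar> = 1 the junk value 0 * ln 0 = 0 gives the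
  convention 0 log 0 = 0.\<close>
definition bin_div :: "real \<Rightarrow> real \<Rightarrow> real" where
  "bin_div x y = (1+x)/2 * ln ((1+x)/(1+y)) + (1-x)/2 * ln ((1-x)/(1-y))"

definition bin_div_term :: "nat \<Rightarrow> real \<Rightarrow> real \<Rightarrow> real" where
  "bin_div_term m x y = x^(2*m+2) / (real (2*m+1) * real (2*m+2))
     + y^(2*m+2) / real (2*m+2) - x * y^(2*m+1) / real (2*m+1)"

lemma bin_div_term_eq:
  "bin_div_term m x y
     = ((1+x)/2 * ln_pair_term x m + (1-x)/2 * ln_pair_term (-x) m)
     - ((1+x)/2 * ln_pair_term y m + (1-x)/2 * ln_pair_term (-y) m)"
proof -
  have alg: "x*X*(a - b) + y*Y*b - x*Y*a
      = ((1+x)/2 * (X*a - x*X*b) + (1-x)/2 * (-X*a - x*X*b))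
      - ((1+x)/2 * (Y*a - y*Y*b) + (1-x)/2 * (-Y*a - y*Y*b))" for X Y a b :: real
    by (simp add: field_simps)
  have "x^(2*m+2) / (real (2*m+1) * real (2*m+2))
      = x * x^(2*m+1) * (1 / real (2*m+1) - 1 / real (2*m+2))"
    by (simp add: field_simps)
  then show ?thesis
    using alg[of "x^(2*m+1)" "1 / real (2*m+1)" "1 / real (2*m+2)" "y^(2*m+1)"]
    unfolding bin_div_term_def ln_pair_term_def by (simp add: power_minus')
qed

lemma bin_div_sums:
  assumes x: "\<bar>x\<bar> \<le> 1" and y: "\<bar>y\<bar> < 1"
  shows "(\<lambda>m. bin_div_term m x y) sums bin_div x y"
proof -
  have "ln_pair_term y sums ln (1 + y)" "ln_pair_term (-y) sums ln (1 - y)"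
    using ln_pair_term_sums[of y] ln_pair_term_sums[of "-y"] y by auto
  then have cross: "(\<lambda>m. (1+x)/2 * ln_pair_term y m + (1-x)/2 * ln_pair_term (-y) m)
      sums ((1+x)/2 * ln (1+y) + (1-x)/2 * ln (1-y))"
    by (intro sums_add sums_mult)
  have mult_ln_div: "c * ln (a/b) = c * ln a - c * ln b"
    if "0 \<le> a" "0 < b" "a = 0 \<Longrightarrow> c = 0" for a b c :: real
    using that by (cases "a = 0") (simp_all add: ln_div right_diff_distrib)
  have "0 \<le> 1+x" "0 \<le> 1-x" "0 < 1+y" "0 < 1-y" using x y by auto
  then have "bin_div x y = ((1+x)/2 * ln (1+x) + (1-x)/2 * ln (1-x))
      - ((1+x)/2 * ln (1+y) + (1-x)/2 * ln (1-y))"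
    unfolding bin_div_def
    using mult_ln_div[of "1+x" "1+y" "(1+x)/2"] mult_ln_div[of "1-x" "1-y" "(1-x)/2"] by (simp add: field_simps)
  then show ?thesis
    unfolding bin_div_term_eq using sums_diff[OF neg_entropy_sums[OF x] cross] by simp
qed

lemma even_power_above_tangent:
  fixes x y :: real
  assumes "even k"
  shows "y^k + real k * y^(k-1) * (x - y) \<le> x^k"
proof (cases "y = 0")
  case True
  show ?thesis
  proof (cases "k = 0")
    case False
    with assms have "k \<ge> 2" by presburger
    then have "y^k + real k * y^(k-1) * (x - y) = 0" using True by (simp add: power_0_left)
    also have "0 \<le> x^k" using assms by (rule zero_le_even_power)
    finally show ?thesis .
  qed simp
next
  case False
  have yk: "y^k > 0" using False assms by (simp add: zero_less_power_eq)
  have "1 + real k * (x/y - 1) \<le> (1 + (x/y - 1))^k"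
    using Bernoulli_inequality_even[OF assms] by blast
  then have "y^k * (1 + real k * (x/y - 1)) \<le> y^k * (x/y)^k"
    using yk by (intro mult_left_mono) auto
  also have "\<dots> = x^k" using False by (simp add: power_divide)
  also have "y^k * (1 + real k * (x/y - 1)) = y^k + real k * y^(k-1) * (x - y)"
    using False by (cases k) (simp_all add: field_simps)
  finally show ?thesis .
qed

lemma bin_div_term_nonneg: "bin_div_term m x y \<ge> 0"
proof -
  define n A B where "n = 2*m+1" and "A = real n" and "B = real (n+1)"
  have eqs: "2*m+1 = n" "2*m+2 = n+1" "real n = A" "real (n+1) = B"
    by (simp_all add: n_def A_def B_def)
  have pos: "A > 0" "B > 0" and B: "B = A + 1" by (simp_all add: n_def A_def B_def)
  have "y^(n+1) + B * y^n * (x - y) \<le> x^(n+1)"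
    using even_power_above_tangent[where k="n+1" and x=x and y=y] by (simp add: n_def B_def)
  then have "0 \<le> x^(n+1) + A * y^(n+1) - B * x * y^n"
    unfolding B by (simp add: algebra_simps)
  then have "0 \<le> (x^(n+1) + A * y^(n+1) - B * x * y^n) / (A * B)"
    using pos by simp
  also have "\<dots> = bin_div_term m x y"
    using pos unfolding bin_div_term_def eqs by (simp add: field_simps)
  finally show ?thesis .
qed

lemma bin_div_term_homogeneous: "bin_div_term m (c*x) (c*y) = (c^2)^(m+1) * bin_div_term m x y"
proof -
  have "(c^2)^(m+1) = c^(2*(m+1))" by (rule power_mult[symmetric])
  also have "\<dots> = c * c^(2*m+1)" by simp
  finally show ?thesis by (simp add: bin_div_term_def power_mult_distrib field_simps)
qed

lemma bin_div_nonneg: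
  assumes "\<bar>x\<bar> \<le> 1" "\<bar>y\<bar> < 1"
  shows "bin_div x y \<ge> 0"
  using sums_le[OF _ sums_zero bin_div_sums[OF assms]] bin_div_term_nonneg by auto

lemma bin_div_same: "bin_div z z = 0"
  by (simp add: bin_div_def)

lemma bin_div_scaled_sums:
  assumes x: "\<bar>x\<bar> \<le> 1" and y: "\<bar>y\<bar> < 1" and c: "\<bar>c\<bar> \<le> 1"
  shows "(\<lambda>m. (c^2)^(m+1) * bin_div_term m x y) sums bin_div (c*x) (c*y)"
proof -
  have "\<bar>c*x\<bar> \<le> 1" using x c by (simp add: abs_mult mult_le_one)
  moreover have "\<bar>c*y\<bar> < 1"
    using y c by (simp add: abs_mult) (meson abs_ge_zero le_less_trans mult_left_le_one_le)
  ultimately show ?thesis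
    using bin_div_sums[of "c*x" "c*y"] by (simp add: bin_div_term_homogeneous)
qed

lemma power_weighted_sum_le:
  fixes w t :: "'a \<Rightarrow> real"
  assumes fin: "finite J" and w: "\<And>j. j \<in> J \<Longrightarrow> w j \<ge> 0" and W1: "(\<Sum>j\<in>J. w j) \<le> 1"
    and t: "\<And>j. j \<in> J \<Longrightarrow> t j \<ge> 0"
  shows "(\<Sum>j\<in>J. w j * t j)^(Suc n) \<le> (\<Sum>j\<in>J. w j * t j^(Suc n))"
proof -
  define W where "W = (\<Sum>j\<in>J. w j)"
  have W0: "W \<ge> 0" unfolding W_def using w by (simp add: sum_nonneg)
  show ?thesis
  proof (cases "W = 0")
    case True
    then have "\<forall>j\<in>J. w j = 0" using sum_nonneg_eq_0_iff[OF fin] w unfolding W_def by blast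
    then show ?thesis by simp
  next
    case False
    then have Wp: "W > 0" using W0 by simp
    have cvx: "convex_on {0..} (\<lambda>x::real. x^(Suc n))"
      by (cases "even (Suc n)") (use convex_power_even convex_on_subset convex_power_odd in blast)+
    have "(\<lambda>x. x^(Suc n)) (\<Sum>j\<in>J. (w j / W) *\<^sub>R t j) \<le> (\<Sum>j\<in>J. (w j / W) * (\<lambda>x. x^(Suc n)) (t j))"
      by (rule convex_on_sum[OF fin _ cvx])
        (use False w t Wp in \<open>auto simp: sum_divide_distrib[symmetric] W_def\<close>)
    then have "((\<Sum>j\<in>J. w j * t j) / W)^(Suc n) \<le> (\<Sum>j\<in>J. w j * t j^(Suc n)) / W"
      by (simp add: sum_divide_distrib)
    then have "(\<Sum>j\<in>J. w j * t j)^(Suc n) \<le> W^n * (\<Sum>j\<in>J. w j * t j^(Suc n))"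
      using Wp by (simp add: power_divide field_simps)
    also have "\<dots> \<le> (\<Sum>j\<in>J. w j * t j^(Suc n))"
      using W0 W1 w t by (intro mult_left_le_one_le sum_nonneg mult_nonneg_nonneg)
        (auto simp: W_def power_le_one)
    finally show ?thesis .
  qed
qed

lemma KL_eq_sum_mult_ln: "KL A P Q = (\<Sum>a\<in>A. P a * ln (P a / Q a))"
  unfolding KL_def by (rule sum.cong) simp_all

text \<open>Two outputs receiving masses a and b from input 0 and b and a from input 1 act like a
  binary symmetric channel of bias (a - b)/(a + b), scaled by a + b.\<close>
lemma two_point_KL_eq_bin_div:
  fixes a b x y :: real
  assumes "a \<ge> 0" "b \<ge> 0"
    and "A = (1+x)/2 * a + (1-x)/2 * b" "B = (1+y)/2 * a + (1-y)/2 * b"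
    and "A' = (1+x)/2 * b + (1-x)/2 * a" "B' = (1+y)/2 * b + (1-y)/2 * a"
  shows "A * ln (A/B) + A' * ln (A'/B') = (a+b) * bin_div ((a-b)/(a+b) * x) ((a-b)/(a+b) * y)"
proof (cases "a + b = 0")
  case True
  then have "a = 0" "b = 0" using assms(1,2) by auto
  then show ?thesis unfolding assms(3,5) by simp
next
  case False
  define w c where "w = a+b" and "c = (a-b)/w"
  have eqs: "A = w * ((1 + c*x)/2)" "B = w * ((1 + c*y)/2)"
    "A' = w * ((1 - c*x)/2)" "B' = w * ((1 - c*y)/2)"
    using False unfolding assms(3-6) w_def c_def by (simp_all add: field_simps)
  have cancel: "(w * (s/2)) / (w * (t/2)) = s / t" for s t :: real
    using False unfolding w_def by simp
  show ?thesis
    unfolding w_def[symmetric] c_def[symmetric] eqs cancel bin_div_def by (simp add: algebra_simps)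
qed

definition bias :: "(bool \<Rightarrow> real) \<Rightarrow> real" where
  "bias P = P False - P True"

lemma is_dist2_bias:
  assumes "is_dist2 P"
  shows "P False = (1 + bias P)/2" "P True = (1 - bias P)/2"
  using assms unfolding is_dist2_def bias_def by auto

lemma abs_bias_le_1:
  assumes "is_dist2 P"
  shows "\<bar>bias P\<bar> \<le> 1"
proof -
  have "P False \<ge> 0" "P True \<ge> 0" "P False + P True = 1"
    using assms unfolding is_dist2_def by auto
  then show ?thesis unfolding bias_def by (simp add: abs_le_iff)
qed

lemma KL_bool_eq_bin_div:
  assumes P: "is_dist2 P" and Q: "is_dist2 Q"
  shows "KL UNIV P Q = bin_div (bias P) (bias Q)"
proof -
  have "KL UNIV P Q = P False * ln (P False / Q False) + P True * ln (P True / Q True)"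
    by (simp add: KL_eq_sum_mult_ln UNIV_bool)
  also have "\<dots> = (1 + 0) * bin_div ((1 - 0) / (1 + 0) * bias P) ((1 - 0) / (1 + 0) * bias Q)"
    by (rule two_point_KL_eq_bin_div) (simp_all add: is_dist2_bias[OF P] is_dist2_bias[OF Q])
  finally show ?thesis by simp
qed

lemma KL_BSC_eq:
  assumes q: "0 \<le> q" "q \<le> 1" and P: "is_dist2 P" and Q: "is_dist2 Q"
  shows "KL UNIV (out_dist (BSC q) P) (out_dist (BSC q) Q)
       = bin_div ((1 - 2*q) * bias P) ((1 - 2*q) * bias Q)"
proof -
  have nonneg: "1 - q \<ge> 0" "q \<ge> 0" using q by auto
  have outputs:
    "out_dist (BSC q) P False = (1 + bias P)/2 * (1 - q) + (1 - bias P)/2 * q"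
    "out_dist (BSC q) Q False = (1 + bias Q)/2 * (1 - q) + (1 - bias Q)/2 * q"
    "out_dist (BSC q) P True = (1 + bias P)/2 * q + (1 - bias P)/2 * (1 - q)"
    "out_dist (BSC q) Q True = (1 + bias Q)/2 * q + (1 - bias Q)/2 * (1 - q)"
    by (simp_all add: out_dist_def UNIV_bool BSC_def is_dist2_bias[OF P] is_dist2_bias[OF Q])
  show ?thesis
    unfolding KL_eq_sum_mult_ln UNIV_bool
    using two_point_KL_eq_bin_div[OF nonneg outputs] by simp
qed

lemma KL_BEC_eq:
  assumes e: "0 \<le> e" "e \<le> 1" and P: "is_dist2 P" and Q: "is_dist2 Q"
  shows "KL BEC_out (out_dist (BEC e) P) (out_dist (BEC e) Q) = (1 - e) * bin_div (bias P) (bias Q)"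
proof -
  have erasure: "out_dist (BEC e) P None = e" "out_dist (BEC e) Q None = e"
    using P Q unfolding out_dist_def BEC_def UNIV_bool is_dist2_def
    by (auto simp: distrib_right[symmetric])
  have nonneg: "1 - e \<ge> 0" "(0::real) \<ge> 0" using e by auto
  have outputs:
    "out_dist (BEC e) P (Some False) = (1 + bias P)/2 * (1 - e) + (1 - bias P)/2 * 0"
    "out_dist (BEC e) Q (Some False) = (1 + bias Q)/2 * (1 - e) + (1 - bias Q)/2 * 0"
    "out_dist (BEC e) P (Some True) = (1 + bias P)/2 * 0 + (1 - bias P)/2 * (1 - e)"
    "out_dist (BEC e) Q (Some True) = (1 + bias Q)/2 * 0 + (1 - bias Q)/2 * (1 - e)"
    by (simp_all add: out_dist_def UNIV_bool BEC_def is_dist2_bias[OF P] is_dist2_bias[OF Q])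
  have "KL BEC_out (out_dist (BEC e) P) (out_dist (BEC e) Q)
      = (1 - e + 0) * bin_div ((1 - e - 0) / (1 - e + 0) * bias P) ((1 - e - 0) / (1 - e + 0) * bias Q)"
    unfolding KL_eq_sum_mult_ln BEC_out_def
    using two_point_KL_eq_bin_div[OF nonneg outputs] by (simp add: erasure)
  then show ?thesis by (cases "e = 1") auto
qed

lemma biso_param_nonneg: "is_biso_param l p \<Longrightarrow> p y \<ge> 0"
  unfolding is_biso_param_def by (cases "y \<in> {-l..l}") auto

lemma sum_symmetric_interval:
  fixes l :: int
  assumes "l \<ge> 0"
  shows "(\<Sum>y\<in>{-l..l}. f y) = f 0 + (\<Sum>j\<in>{1..l}. f j + f (-j))"
proof -
  have split: "{-l..l} = insert 0 ({1..l} \<union> uminus ` {1..l})"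
    using assms by (auto simp: image_iff)
  have "(\<Sum>y\<in>{-l..l}. f y) = f 0 + (\<Sum>y\<in>{1..l}. f y) + (\<Sum>y\<in>uminus ` {1..l}. f y)"
    unfolding split by (subst sum.insert) (auto simp: sum.union_disjoint add.assoc)
  also have "(\<Sum>y\<in>uminus ` {1..l}. f y) = (\<Sum>j\<in>{1..l}. f (-j))"
    by (subst sum.reindex) (auto simp: inj_on_def)
  finally show ?thesis by (simp add: sum.distrib add.assoc)
qed

definition biso_weight :: "(int \<Rightarrow> real) \<Rightarrow> int \<Rightarrow> real" where
  "biso_weight p j = p j + p (-j)"

definition biso_bias :: "(int \<Rightarrow> real) \<Rightarrow> int \<Rightarrow> real" where
  "biso_bias p j = (p j - p (-j)) / (p j + p (-j))"

definition biso_div :: "int \<Rightarrow> (int \<Rightarrow> real) \<Rightarrow> real \<Rightarrow> real \<Rightarrow> real" where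
  "biso_div l p x y = (\<Sum>j\<in>{1..l}. biso_weight p j * bin_div (biso_bias p j * x) (biso_bias p j * y))"

definition biso_theta :: "int \<Rightarrow> (int \<Rightarrow> real) \<Rightarrow> real" where
  "biso_theta l p = (\<Sum>j\<in>{1..l}. biso_weight p j * (biso_bias p j)^2)"

lemma biso_weight_nonneg: "is_biso_param l p \<Longrightarrow> biso_weight p j \<ge> 0"
  unfolding biso_weight_def using biso_param_nonneg by (metis add_nonneg_nonneg)

lemma abs_biso_bias_le_1:
  assumes "is_biso_param l p"
  shows "\<bar>biso_bias p j\<bar> \<le> 1"
proof -
  have "p j \<ge> 0" "p (-j) \<ge> 0" using biso_param_nonneg[OF assms] by auto
  then have "\<bar>p j - p (-j)\<bar> \<le> \<bar>p j + p (-j)\<bar>" by linarith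
  then show ?thesis unfolding biso_bias_def abs_divide
    by (cases "p j + p (-j) = 0") (simp_all add: divide_le_eq_1)
qed

lemma biso_bias_square_le_1: "is_biso_param l p \<Longrightarrow> (biso_bias p j)^2 \<le> 1"
  using abs_biso_bias_le_1 abs_square_le_1 by blast

lemma sum_biso_weight_le_1:
  assumes bp: "is_biso_param l p"
  shows "(\<Sum>j\<in>{1..l}. biso_weight p j) \<le> 1"
proof -
  have "1 = p 0 + (\<Sum>j\<in>{1..l}. biso_weight p j)"
    using bp sum_symmetric_interval[of l p] unfolding is_biso_param_def biso_weight_def by simp
  then show ?thesis using biso_param_nonneg[OF bp, of 0] by linarith
qed

lemma KL_biso_eq:
  assumes bp: "is_biso_param l p" and P: "is_dist2 P" and Q: "is_dist2 Q"
  shows "KL {-l..l} (out_dist (biso p) P) (out_dist (biso p) Q) = biso_div l p (bias P) (bias Q)"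
proof -
  have out: "out_dist (biso p) R y = (1 + bias R)/2 * p y + (1 - bias R)/2 * p (-y)"
    if "is_dist2 R" for R y
    by (simp add: out_dist_def biso_def UNIV_bool is_dist2_bias[OF that])
  have pair: "out_dist (biso p) P j * ln (out_dist (biso p) P j / out_dist (biso p) Q j)
      + out_dist (biso p) P (-j) * ln (out_dist (biso p) P (-j) / out_dist (biso p) Q (-j))
      = biso_weight p j * bin_div (biso_bias p j * bias P) (biso_bias p j * bias Q)" for j
    using two_point_KL_eq_bin_div[OF biso_param_nonneg[OF bp] biso_param_nonneg[OF bp]]
    unfolding out[OF P] out[OF Q] biso_weight_def biso_bias_def by simp
  have "out_dist (biso p) P 0 = out_dist (biso p) Q 0"
    unfolding out[OF P] out[OF Q] by (simp add: field_simps)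
  moreover have "l \<ge> 0" using bp unfolding is_biso_param_def by simp
  ultimately show ?thesis
    unfolding KL_eq_sum_mult_ln biso_div_def sum_symmetric_interval[OF \<open>l \<ge> 0\<close>] pair by simp
qed

lemma biso_div_sums:
  assumes bp: "is_biso_param l p" and x: "\<bar>x\<bar> \<le> 1" and y: "\<bar>y\<bar> < 1"
  shows "(\<lambda>m. (\<Sum>j\<in>{1..l}. biso_weight p j * ((biso_bias p j)^2)^(m+1)) * bin_div_term m x y)
           sums biso_div l p x y"
proof -
  have "(\<lambda>m. \<Sum>j\<in>{1..l}. biso_weight p j * (((biso_bias p j)^2)^(m+1) * bin_div_term m x y))
      sums biso_div l p x y"
    unfolding biso_div_def
    by (intro sums_sum sums_mult bin_div_scaled_sums x y abs_biso_bias_le_1[OF bp])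
  then show ?thesis by (simp add: sum_distrib_right mult.assoc)
qed

lemma biso_div_le_theta_bin_div:
  assumes bp: "is_biso_param l p" and x: "\<bar>x\<bar> \<le> 1" and y: "\<bar>y\<bar> < 1"
  shows "biso_div l p x y \<le> biso_theta l p * bin_div x y"
proof (rule sums_le[OF _ biso_div_sums[OF bp x y] sums_mult[OF bin_div_sums[OF x y]]])
  fix m
  have "biso_weight p j * ((biso_bias p j)^2)^(m+1) \<le> biso_weight p j * (biso_bias p j)^2" for j
    using biso_weight_nonneg[OF bp] biso_bias_square_le_1[OF bp]
    by (intro mult_left_mono) (auto simp: power_le_one mult_left_le)
  then show "(\<Sum>j\<in>{1..l}. biso_weight p j * ((biso_bias p j)^2)^(m+1)) * bin_div_term m x y
      \<le> biso_theta l p * bin_div_term m x y"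
    unfolding biso_theta_def by (intro mult_right_mono sum_mono bin_div_term_nonneg)
qed

lemma biso_theta_le_1:
  assumes bp: "is_biso_param l p"
  shows "biso_theta l p \<le> 1"
proof -
  have "biso_theta l p \<le> (\<Sum>j\<in>{1..l}. biso_weight p j)"
    unfolding biso_theta_def using biso_weight_nonneg[OF bp] biso_bias_square_le_1[OF bp]
    by (intro sum_mono) (simp add: mult_left_le)
  then show ?thesis using sum_biso_weight_le_1[OF bp] by linarith
qed

lemma bin_div_scaled_le_biso_div:
  assumes bp: "is_biso_param l p" and x: "\<bar>x\<bar> \<le> 1" and y: "\<bar>y\<bar> < 1"
    and e: "0 \<le> e" "e \<le> biso_theta l p"
  shows "bin_div (sqrt e * x) (sqrt e * y) \<le> biso_div l p x y"
proof -
  have "\<bar>sqrt e\<bar> \<le> 1" using e biso_theta_le_1[OF bp] by simp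
  then have scaled: "(\<lambda>m. e^(m+1) * bin_div_term m x y) sums bin_div (sqrt e * x) (sqrt e * y)"
    using bin_div_scaled_sums[OF x y, of "sqrt e"] e by simp
  have coeff: "e^(m+1) \<le> (\<Sum>j\<in>{1..l}. biso_weight p j * ((biso_bias p j)^2)^(m+1))" for m
  proof -
    have "e^(m+1) \<le> (biso_theta l p)^(m+1)" using e by (intro power_mono)
    also have "\<dots> \<le> (\<Sum>j\<in>{1..l}. biso_weight p j * ((biso_bias p j)^2)^(m+1))"
      unfolding biso_theta_def
      using power_weighted_sum_le[of "{1..l}" "biso_weight p" "\<lambda>j. (biso_bias p j)^2" m]
      by (simp add: biso_weight_nonneg[OF bp] sum_biso_weight_le_1[OF bp])
    finally show ?thesis .
  qed
  show ?thesis
    by (rule sums_le[OF _ scaled biso_div_sums[OF bp x y]])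
      (rule mult_right_mono[OF coeff bin_div_term_nonneg])
qed

definition KL_ratios :: "(bool \<Rightarrow> 'y \<Rightarrow> real) \<Rightarrow> 'y set \<Rightarrow> real set" where
  "KL_ratios ch Y = {KL Y (out_dist ch P) (out_dist ch Q) / KL UNIV P Q | P Q.
      is_dist2 P \<and> is_dist2 Q \<and> abs_cont UNIV P Q \<and> 0 < KL UNIV P Q}"

lemma eta_KL_eq_Sup: "eta_KL ch Y = Sup (KL_ratios ch Y)"
  unfolding eta_KL_def KL_ratios_def ..

lemma KL_ratios_nonempty: "KL_ratios ch Y \<noteq> {}"
proof -
  define P Q where "P = (\<lambda>b::bool. if b then 0 else (1::real))" and "Q = (\<lambda>b::bool. 1/2::real)"
  have "is_dist2 P" "is_dist2 Q" "abs_cont UNIV P Q" "KL UNIV P Q = ln 2"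
    unfolding is_dist2_def abs_cont_def KL_def P_def Q_def by (auto simp: UNIV_bool)
  then show ?thesis unfolding KL_ratios_def by fastforce
qed

lemma bias_eq_if_abs_cont_deterministic:
  assumes P: "is_dist2 P" and Q: "is_dist2 Q" and ac: "abs_cont UNIV P Q" and "\<not> \<bar>bias Q\<bar> < 1"
  shows "bias P = bias Q"
proof -
  have p: "P False \<ge> 0" "P True \<ge> 0" "P False + P True = 1"
    and q: "Q False \<ge> 0" "Q True \<ge> 0" "Q False + Q True = 1"
    using P Q unfolding is_dist2_def by auto
  then consider "Q True = 0" | "Q False = 0" using assms(4) unfolding bias_def by linarith
  then show ?thesis
    by cases (use ac p q in \<open>simp_all add: abs_cont_def bias_def\<close>)
qed

lemma KL_ratio_biso_bounds:
  assumes bp: "is_biso_param l p" and r: "r \<in> KL_ratios (biso p) {-l..l}"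
  shows "0 \<le> r" "r \<le> biso_theta l p"
proof -
  obtain P Q where P: "is_dist2 P" and Q: "is_dist2 Q" and "abs_cont UNIV P Q"
    and pos: "0 < bin_div (bias P) (bias Q)"
    and r: "r = biso_div l p (bias P) (bias Q) / bin_div (bias P) (bias Q)"
    using r unfolding KL_ratios_def by (auto simp: KL_biso_eq[OF bp] KL_bool_eq_bin_div)
  then have y: "\<bar>bias Q\<bar> < 1"
    using bias_eq_if_abs_cont_deterministic bin_div_same by (metis less_irrefl)
  have x: "\<bar>bias P\<bar> \<le> 1" using abs_bias_le_1 P .
  show "0 \<le> r"
    unfolding r using sums_le[OF _ sums_zero biso_div_sums[OF bp x y]] pos
    by (simp add: biso_weight_nonneg[OF bp] bin_div_term_nonneg sum_nonneg)
  show "r \<le> biso_theta l p"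
    unfolding r using biso_div_le_theta_bin_div[OF bp x y] pos by (simp add: divide_le_eq)
qed

lemma KL_ratio_le_eta_KL_biso:
  assumes bp: "is_biso_param l p" and r: "r \<in> KL_ratios (biso p) {-l..l}"
  shows "r \<le> eta_KL (biso p) {-l..l}"
proof -
  have "bdd_above (KL_ratios (biso p) {-l..l})"
    using KL_ratio_biso_bounds(2)[OF bp] by (auto simp: bdd_above_def)
  then show ?thesis unfolding eta_KL_eq_Sup by (rule cSup_upper[OF r])
qed

lemma eta_KL_biso_bounds:
  assumes bp: "is_biso_param l p"
  shows "0 \<le> eta_KL (biso p) {-l..l}" "eta_KL (biso p) {-l..l} \<le> biso_theta l p"
proof -
  obtain r where "r \<in> KL_ratios (biso p) {-l..l}" using KL_ratios_nonempty by blast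
  then show "0 \<le> eta_KL (biso p) {-l..l}"
    using KL_ratio_biso_bounds(1)[OF bp] KL_ratio_le_eta_KL_biso[OF bp] by (meson order_trans)
  show "eta_KL (biso p) {-l..l} \<le> biso_theta l p"
    unfolding eta_KL_eq_Sup using KL_ratios_nonempty KL_ratio_biso_bounds(2)[OF bp] by (rule cSup_least)
qed

lemma KL_biso_le_eta_KL:
  assumes bp: "is_biso_param l p" and P: "is_dist2 P" and Q: "is_dist2 Q" and ac: "abs_cont UNIV P Q"
  shows "KL {-l..l} (out_dist (biso p) P) (out_dist (biso p) Q) \<le> eta_KL (biso p) {-l..l} * KL UNIV P Q"
proof (cases "0 < KL UNIV P Q")
  case True
  then have "KL {-l..l} (out_dist (biso p) P) (out_dist (biso p) Q) / KL UNIV P Q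
      \<in> KL_ratios (biso p) {-l..l}"
    unfolding KL_ratios_def using P Q ac by blast
  then have "KL {-l..l} (out_dist (biso p) P) (out_dist (biso p) Q) / KL UNIV P Q
      \<le> eta_KL (biso p) {-l..l}"
    by (rule KL_ratio_le_eta_KL_biso[OF bp])
  with True show ?thesis by (simp add: pos_divide_le_eq mult.commute)
next
  case False
  have x: "\<bar>bias P\<bar> \<le> 1" using abs_bias_le_1 P .
  show ?thesis
  proof (cases "\<bar>bias Q\<bar> < 1")
    case True
    with False have "bin_div (bias P) (bias Q) = 0"
      using bin_div_nonneg[OF x] KL_bool_eq_bin_div[OF P Q] by fastforce
    with biso_div_le_theta_bin_div[OF bp x True] show ?thesis
      by (simp add: KL_biso_eq[OF bp P Q] KL_bool_eq_bin_div[OF P Q])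
  next
    case False
    then have "bias P = bias Q" using bias_eq_if_abs_cont_deterministic P Q ac by blast
    then show ?thesis
      by (simp add: KL_biso_eq[OF bp P Q] KL_bool_eq_bin_div[OF P Q] biso_div_def bin_div_same)
  qed
qed

lemma KL_BSC_le_KL_biso:
  assumes bp: "is_biso_param l p" and P: "is_dist2 P" and Q: "is_dist2 Q" and ac: "abs_cont UNIV P Q"
  defines "\<eta> \<equiv> eta_KL (biso p) {-l..l}"
  shows "KL UNIV (out_dist (BSC ((1 - sqrt \<eta>) / 2)) P) (out_dist (BSC ((1 - sqrt \<eta>) / 2)) Q)
     \<le> KL {-l..l} (out_dist (biso p) P) (out_dist (biso p) Q)"
proof -
  have \<eta>: "0 \<le> \<eta>" "\<eta> \<le> biso_theta l p"
    unfolding \<eta>_def using eta_KL_biso_bounds[OF bp] by auto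
  have "0 \<le> sqrt \<eta>" "sqrt \<eta> \<le> 1" using \<eta> biso_theta_le_1[OF bp] by simp_all
  then have "0 \<le> (1 - sqrt \<eta>) / 2" and "(1 - sqrt \<eta>) / 2 \<le> 1" by (simp_all del: real_sqrt_ge_0_iff)
  moreover have "1 - 2 * ((1 - sqrt \<eta>) / 2) = sqrt \<eta>" by (simp add: field_simps)
  ultimately have "KL UNIV (out_dist (BSC ((1 - sqrt \<eta>) / 2)) P) (out_dist (BSC ((1 - sqrt \<eta>) / 2)) Q)
      = bin_div (sqrt \<eta> * bias P) (sqrt \<eta> * bias Q)"
    using KL_BSC_eq[OF _ _ P Q] by metis
  moreover have "\<bar>bias P\<bar> \<le> 1" using abs_bias_le_1 P .
  moreover have "\<not> \<bar>bias Q\<bar> < 1 \<Longrightarrow> bias P = bias Q"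
    using bias_eq_if_abs_cont_deterministic P Q ac by blast
  ultimately show ?thesis
    using bin_div_scaled_le_biso_div[OF bp _ _ \<eta>]
    by (cases "\<bar>bias Q\<bar> < 1") (auto simp: KL_biso_eq[OF bp P Q] biso_div_def bin_div_same)
qed

definition marginal_U :: "(nat \<Rightarrow> bool \<Rightarrow> real) \<Rightarrow> nat \<Rightarrow> real" where
  "marginal_U PUX u = (\<Sum>x\<in>UNIV. PUX u x)"

definition marginal_X :: "nat \<Rightarrow> (nat \<Rightarrow> bool \<Rightarrow> real) \<Rightarrow> bool \<Rightarrow> real" where
  "marginal_X k PUX x = (\<Sum>u<k. PUX u x)"

definition cond_X :: "(nat \<Rightarrow> bool \<Rightarrow> real) \<Rightarrow> nat \<Rightarrow> bool \<Rightarrow> real" where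
  "cond_X PUX u x = PUX u x / marginal_U PUX u"

lemma mutual_info_eq_sum_KL:
  assumes J: "is_joint k PUX"
  shows "mutual_info ch Y k PUX
       = (\<Sum>u<k. marginal_U PUX u * KL Y (out_dist ch (cond_X PUX u)) (out_dist ch (marginal_X k PUX)))"
proof -
  have nonneg: "PUX u x \<ge> 0" for u x using J unfolding is_joint_def by blast
  have PY: "(\<Sum>u<k. \<Sum>x\<in>UNIV. PUX u x * ch x y) = out_dist ch (marginal_X k PUX) y" for y
    unfolding out_dist_def marginal_X_def sum_distrib_right by (rule sum.swap)
  have PUY: "(\<Sum>x\<in>UNIV. PUX u x * ch x y) = marginal_U PUX u * out_dist ch (cond_X PUX u) y" for u y
  proof (cases "marginal_U PUX u = 0")
    case True
    then have "PUX u x = 0" for x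
      using nonneg[of u True] nonneg[of u False] unfolding marginal_U_def UNIV_bool by (cases x) auto
    then show ?thesis using True by simp
  next
    case False
    then show ?thesis unfolding out_dist_def cond_X_def sum_distrib_left by simp
  qed
  have "(if \<pi> * a = 0 then 0 else \<pi> * a * ln (\<pi> * a / (\<pi> * b))) = \<pi> * (a * ln (a / b))"
    for \<pi> a b :: real by simp
  then show ?thesis
    unfolding mutual_info_def Let_def PY unfolding PUY marginal_U_def[symmetric] KL_eq_sum_mult_ln
    by (simp add: sum_distrib_left)
qed

lemma is_dist2_marginal_X: "is_joint k PUX \<Longrightarrow> is_dist2 (marginal_X k PUX)"
  unfolding is_joint_def is_dist2_def marginal_X_def
  by (simp add: sum_nonneg sum.distrib UNIV_bool)

lemma marginal_U_nonneg: "is_joint k PUX \<Longrightarrow> marginal_U PUX u \<ge> 0"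
  unfolding is_joint_def marginal_U_def by (simp add: sum_nonneg)

lemma is_dist2_cond_X:
  assumes "is_joint k PUX" "marginal_U PUX u \<noteq> 0"
  shows "is_dist2 (cond_X PUX u)"
  using assms marginal_U_nonneg[OF assms(1), of u]
  unfolding is_dist2_def is_joint_def cond_X_def
  by (auto simp: marginal_U_def UNIV_bool add_divide_distrib[symmetric])

lemma abs_cont_cond_X:
  assumes "is_joint k PUX" "u < k"
  shows "abs_cont UNIV (cond_X PUX u) (marginal_X k PUX)"
  unfolding abs_cont_def cond_X_def marginal_X_def
proof (intro ballI impI)
  fix x assume "(\<Sum>v<k. PUX v x) = 0"
  then have "PUX u x = 0"
    using assms sum_nonneg_eq_0_iff[of "{..<k}" "\<lambda>v. PUX v x"] unfolding is_joint_def by auto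
  then show "PUX u x / marginal_U PUX u = 0" by simp
qed

lemma less_noisyI:
  assumes KL_le: "\<And>P Q. is_dist2 P \<Longrightarrow> is_dist2 Q \<Longrightarrow> abs_cont UNIV P Q \<Longrightarrow>
      KL Z (out_dist chZ P) (out_dist chZ Q) \<le> KL Y (out_dist chY P) (out_dist chY Q)"
  shows "less_noisy chY Y chZ Z"
  unfolding less_noisy_def
proof (intro allI impI)
  fix k PUX assume J: "is_joint k PUX"
  show "mutual_info chZ Z k PUX \<le> mutual_info chY Y k PUX"
    unfolding mutual_info_eq_sum_KL[OF J]
  proof (rule sum_mono)
    fix u assume "u \<in> {..<k}"
    then show "marginal_U PUX u * KL Z (out_dist chZ (cond_X PUX u)) (out_dist chZ (marginal_X k PUX))
        \<le> marginal_U PUX u * KL Y (out_dist chY (cond_X PUX u)) (out_dist chY (marginal_X k PUX))"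
      using KL_le[OF is_dist2_cond_X[OF J] is_dist2_marginal_X[OF J] abs_cont_cond_X[OF J]]
        marginal_U_nonneg[OF J]
      by (cases "marginal_U PUX u = 0") (auto intro: mult_left_mono)
  qed
qed

theorem theorem1:
  fixes l :: int and p :: "int \<Rightarrow> real"
  assumes "is_biso_param l p"
  defines "\<eta> \<equiv> eta_KL (biso p) {-l..l}"
  shows "less_noisy (BEC (1 - \<eta>)) BEC_out (biso p) {-l..l}
       \<and> less_noisy (biso p) {-l..l} (BSC ((1 - sqrt \<eta>) / 2)) UNIV"
proof
  have "0 \<le> \<eta>" "\<eta> \<le> 1"
    unfolding \<eta>_def using eta_KL_biso_bounds[OF assms(1)] biso_theta_le_1[OF assms(1)] by auto
  then show "less_noisy (BEC (1 - \<eta>)) BEC_out (biso p) {-l..l}"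
    using KL_biso_le_eta_KL[OF assms(1)]
    by (intro less_noisyI) (simp add: KL_BEC_eq KL_bool_eq_bin_div \<eta>_def)
  show "less_noisy (biso p) {-l..l} (BSC ((1 - sqrt \<eta>) / 2)) UNIV"
    unfolding \<eta>_def using KL_BSC_le_KL_biso[OF assms(1)] by (rule less_noisyI)
qed

end
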